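(* Let $\delta\in[1/3,1]$, $\alpha>0$ with $\alpha\delta<1$, and $\eta_0^{2}=\frac{1+\alpha^{2}}{1+\delta^{2}}$. Let $0\le B_0\le\sqrt{1-\eta_0^2\delta^2}$ and define $\widetilde{A_\ast}=\sqrt{1-(1+\delta^2)B_0^2}$ and $\Delta'=\varepsilon^{4}B_0^{4}(1+\delta^{2})^{4}-2\widetilde{A_\ast}^{2}$. If $\alpha\ge\frac{10}{3}\varepsilon^{2}$ and $\varepsilon>0$ is small enough, then $-\Delta'\ge\widetilde{A_\ast}^{2}$.
   Context: Note $1-\eta_0^2\delta^2=\frac{1-\alpha^2\delta^2}{1+\delta^2}$, so $\widetilde{A_\ast}\ge\alpha\delta$ on the given range of $B_0$. *)

theory Defs
  imports Complex_Main
begin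

end

theory Submission
  imports Defs
begin

text \<open>Put \<open>x = (1 + \<delta>\<^sup>2) B\<^sub>0\<^sup>2\<close>, so that \<open>A\<^sup>2 = 1 - x\<close> and the claim reads
  \<open>(\<epsilon>\<^sup>2 (1 + \<delta>\<^sup>2))\<^sup>2 x\<^sup>2 \<le> 1 - x\<close>. The bound on \<open>B\<^sub>0\<close> says \<open>x \<le> 1 - (\<alpha>\<delta>)\<^sup>2\<close>, and
  since \<open>3 (1 + \<delta>\<^sup>2) \<le> 10 \<delta>\<close> on \<open>[1/3, 3]\<close>, the hypothesis \<open>\<alpha> \<ge> 10/3 \<epsilon>\<^sup>2\<close> gives
  \<open>\<epsilon>\<^sup>2 (1 + \<delta>\<^sup>2) \<le> \<alpha>\<delta>\<close>. Hence the left side is at most \<open>(\<alpha>\<delta>)\<^sup>2 \<le> 1 - x\<close>.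
  No smallness of \<open>\<epsilon>\<close> is actually needed.\<close>

lemma three_one_plus_sq_le_ten_mult:
  fixes d :: real
  assumes "1/3 \<le> d" "d \<le> 3"
  shows "3 * (1 + d\<^sup>2) \<le> 10 * d"
proof -
  have "(3 * d - 1) * (d - 3) \<le> 0"
    using assms by (intro mult_nonneg_nonpos) auto
  then show ?thesis by (simp add: algebra_simps power2_eq_square)
qed

lemma sq_mult_one_plus_sq_le_mult:
  fixes e d a :: real
  assumes "1/3 \<le> d" "d \<le> 3" "10/3 * e\<^sup>2 \<le> a"
  shows "e\<^sup>2 * (1 + d\<^sup>2) \<le> a * d"
proof -
  have "e\<^sup>2 * (3 * (1 + d\<^sup>2)) \<le> e\<^sup>2 * (10 * d)"
    using three_one_plus_sq_le_ten_mult[OF assms(1,2)] by (simp add: mult_left_mono)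
  also have "\<dots> = 3 * (10/3 * e\<^sup>2 * d)" by simp
  also have "\<dots> \<le> 3 * (a * d)"
    using assms by (simp add: mult_right_mono)
  finally show ?thesis by (simp add: algebra_simps)
qed

lemma scaled_sq_le_of_le_sqrt:
  fixes a d B :: real
  assumes "0 \<le> B" "B \<le> sqrt (1 - ((1 + a\<^sup>2) / (1 + d\<^sup>2)) * d\<^sup>2)"
  shows "(1 + d\<^sup>2) * B\<^sup>2 \<le> 1 - (a * d)\<^sup>2"
proof -
  let ?t = "1 - ((1 + a\<^sup>2) / (1 + d\<^sup>2)) * d\<^sup>2"
  have pos: "0 < 1 + d\<^sup>2" by (simp add: add_pos_nonneg)
  have "?t \<ge> 0" using assms real_sqrt_lt_0_iff[of ?t] by linarith
  then have "B\<^sup>2 \<le> ?t"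
    using assms by (metis power_mono real_sqrt_pow2)
  then have "(1 + d\<^sup>2) * B\<^sup>2 \<le> (1 + d\<^sup>2) * ?t"
    using pos by simp
  also have "\<dots> = 1 - (a * d)\<^sup>2"
    using pos by (simp add: field_simps power_mult_distrib)
  finally show ?thesis .
qed

lemma sq_mult_sq_le_one_minus:
  fixes c s x :: real
  assumes "0 \<le> c" "c \<le> s" "0 \<le> x" "x \<le> 1 - s\<^sup>2"
  shows "c\<^sup>2 * x\<^sup>2 \<le> 1 - x"
proof -
  have "x \<le> 1" using assms zero_le_power2[of s] by linarith
  then have "x\<^sup>2 \<le> 1" using assms(3) by (simp add: power_le_one)
  then have "c\<^sup>2 * x\<^sup>2 \<le> s\<^sup>2 * 1"
    using assms by (intro mult_mono power_mono) auto
  then show ?thesis using assms by simp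
qed

theorem lemma2:
  shows "\<exists>\<epsilon>0>0. \<forall>(\<epsilon>::real) (\<delta>::real) (\<alpha>::real) (B0::real).
    0 < \<epsilon> \<and> \<epsilon> < \<epsilon>0 \<and>
    1/3 \<le> \<delta> \<and> \<delta> \<le> 1 \<and> 0 < \<alpha> \<and> \<alpha> * \<delta> < 1 \<and>
    0 \<le> B0 \<and> B0 \<le> sqrt (1 - ((1 + \<alpha>\<^sup>2) / (1 + \<delta>\<^sup>2)) * \<delta>\<^sup>2) \<and>
    \<alpha> \<ge> 10/3 * \<epsilon>\<^sup>2 \<longrightarrow>
    (let A = sqrt (1 - (1 + \<delta>\<^sup>2) * B0\<^sup>2);
         \<Delta>' = \<epsilon>^4 * B0^4 * (1 + \<delta>\<^sup>2)^4 - 2 * A\<^sup>2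
     in - \<Delta>' \<ge> A\<^sup>2)"
proof (intro exI[of _ 1] conjI allI impI)
  fix e d a B :: real
  assume "0 < e \<and> e < 1 \<and> 1/3 \<le> d \<and> d \<le> 1 \<and> 0 < a \<and> a * d < 1 \<and>
    0 \<le> B \<and> B \<le> sqrt (1 - ((1 + a\<^sup>2) / (1 + d\<^sup>2)) * d\<^sup>2) \<and> a \<ge> 10/3 * e\<^sup>2"
  then have d: "1/3 \<le> d" "d \<le> 3" and B: "0 \<le> B" "B \<le> sqrt (1 - ((1 + a\<^sup>2) / (1 + d\<^sup>2)) * d\<^sup>2)"
    and a: "10/3 * e\<^sup>2 \<le> a"
    by auto
  define x where "x = (1 + d\<^sup>2) * B\<^sup>2"
  have bound: "(e\<^sup>2 * (1 + d\<^sup>2))\<^sup>2 * x\<^sup>2 \<le> 1 - x"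
    unfolding x_def
    by (rule sq_mult_sq_le_one_minus[OF _ sq_mult_one_plus_sq_le_mult[OF d a] _
          scaled_sq_le_of_le_sqrt[OF B]]) simp_all
  moreover have "0 \<le> (e\<^sup>2 * (1 + d\<^sup>2))\<^sup>2 * x\<^sup>2" by simp
  ultimately have "(sqrt (1 - x))\<^sup>2 = 1 - x"
    by (intro real_sqrt_pow2) linarith
  moreover have "e^4 * B^4 * (1 + d\<^sup>2)^4 = (e\<^sup>2 * (1 + d\<^sup>2))\<^sup>2 * x\<^sup>2"
    unfolding x_def by (simp add: algebra_simps power2_eq_square power4_eq_xxxx)
  ultimately show "let A = sqrt (1 - (1 + d\<^sup>2) * B\<^sup>2);
         \<Delta>' = e^4 * B^4 * (1 + d\<^sup>2)^4 - 2 * A\<^sup>2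
     in - \<Delta>' \<ge> A\<^sup>2"
    using bound unfolding x_def Let_def by linarith
qed simp

end
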